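(* Let $k$ be a field of characteristic different from $2$. Among Lie algebras over $k$ of the form $\mathfrak{n}(S,E)$ with $(S,E)$ a finite simple graph and $\dim\mathfrak{n}(S,E)=6$, there are exactly five isomorphism classes.
   Context: A finite simple graph $(S,E)$ has finite vertex set $S$ and edge set $E$ consisting of unordered pairs $\alpha\beta$ of distinct vertices. Let $V$ be the $k$-vector space with basis $S$, and let $W\subseteq \bigwedge^2 V$ be the subspace spanned by all $\alpha\wedge\beta$ with $\alpha,\beta\in S$, $\alpha\neq\beta$ and $\alpha\beta\notin E$. The Lie algebra $\mathfrak{n}(S,E)$ is the vector space $V\oplus (\bigwedge^2V)/W$ with bracket determined by $[v_1,v_2]=v_1\wedge v_2 \bmod W$ for $v_1,v_2\in V$ and $[x,y]=0$ for $x\in\mathfrak{n}(S,E)$, $y\in(\bigwedge^2V)/W$. It has dimension $|S|+|E|$. *)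

theory Defs
  imports Main
begin

definition simple_graph :: "'a set \<Rightarrow> 'a set set \<Rightarrow> bool" where
  "simple_graph S E \<longleftrightarrow> finite S \<and>
     E \<subseteq> {{a, b} | a b. a \<in> S \<and> b \<in> S \<and> a \<noteq> b}"

(* Concrete model of n(S,E) = V \<oplus> (\<Lambda>^2 V)/W over the field 'k:
   V = functions S \<rightarrow> k (zero outside S);
   \<Lambda>^2 V = alternating "matrices" m (m a b = - m b a), with a\<wedge>b corresponding
   to the matrix with m a b = 1, m b a = -1; quotienting by W (spanned by a\<wedge>b for
   non-edges) amounts to keeping only the entries m a b with {a,b} \<in> E. *)
type_synonym ('a, 'k) nelem = "('a \<Rightarrow> 'k) \<times> ('a \<Rightarrow> 'a \<Rightarrow> 'k)"

definition ncarrier :: "'a set \<Rightarrow> 'a set set \<Rightarrow> ('a, 'k::field) nelem set" where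
  "ncarrier S E = {(v, m). (\<forall>a. a \<notin> S \<longrightarrow> v a = 0) \<and> (\<forall>a b. m a b = - m b a) \<and>
                            (\<forall>a b. {a, b} \<notin> E \<longrightarrow> m a b = 0)}"

definition nadd :: "('a, 'k::field) nelem \<Rightarrow> ('a, 'k) nelem \<Rightarrow> ('a, 'k) nelem" where
  "nadd x y = (\<lambda>a. fst x a + fst y a, \<lambda>a b. snd x a b + snd y a b)"

definition nsmul :: "'k::field \<Rightarrow> ('a, 'k) nelem \<Rightarrow> ('a, 'k) nelem" where
  "nsmul c x = (\<lambda>a. c * fst x a, \<lambda>a b. c * snd x a b)"

(* bracket: [v1 + m1, v2 + m2] = v1 \<wedge> v2 mod W *)
definition nbracket :: "'a set set \<Rightarrow> ('a, 'k::field) nelem \<Rightarrow> ('a, 'k) nelem \<Rightarrow> ('a, 'k) nelem" where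
  "nbracket E x y = (\<lambda>a. 0,
     \<lambda>a b. if {a, b} \<in> E then fst x a * fst y b - fst x b * fst y a else 0)"

definition lie_iso :: "'k::field itself \<Rightarrow> 'a set \<Rightarrow> 'a set set \<Rightarrow> 'a set \<Rightarrow> 'a set set \<Rightarrow> bool" where
  "lie_iso (TYPE('k)) S1 E1 S2 E2 \<longleftrightarrow>
     (\<exists>f :: ('a, 'k) nelem \<Rightarrow> ('a, 'k) nelem.
        bij_betw f (ncarrier S1 E1) (ncarrier S2 E2) \<and>
        (\<forall>x\<in>ncarrier S1 E1. \<forall>y\<in>ncarrier S1 E1. f (nadd x y) = nadd (f x) (f y)) \<and>
        (\<forall>c. \<forall>x\<in>ncarrier S1 E1. f (nsmul c x) = nsmul c (f x)) \<and>
        (\<forall>x\<in>ncarrier S1 E1. \<forall>y\<in>ncarrier S1 E1. f (nbracket E1 x y) = nbracket E2 (f x) (f y)))"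

(* finite simple graphs (vertices labelled by naturals; every finite graph is isomorphic
   to one of these) with dim n(S,E) = |S| + |E| = 6 *)
definition graphs6 :: "(nat set \<times> nat set set) set" where
  "graphs6 = {(S, E). simple_graph S E \<and> card S + card E = 6}"

end

theory Submission
  imports Defs
begin

text \<open>Relabelling the vertices along a graph isomorphism permutes the coordinates of
  \<open>n(S, E)\<close>, so isomorphic graphs give isomorphic Lie algebras, and the graphs with
  \<open>|S| + |E| = 6\<close> fall into five classes: six isolated vertices, one edge, two adjacent edges,
  two disjoint edges, and a triangle. Two invariants tell the five algebras apart.
  The derived algebra has dimension \<open>|E|\<close>: the brackets of the basis vectors along \<open>d + 1\<close>
  distinct edges have the identity matrix as edge coordinates, which cannot factor through
  \<open>k\<^sup>d\<close>. For the two graphs with two edges, the isolated vertex of the path graph gives a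
  central element that is not a bracket, whereas for two disjoint edges every central element is
  a single bracket.\<close>

section \<open>Elements of \<open>n(S, E)\<close>\<close>

definition nzero :: "('a, 'k::field) nelem" where
  "nzero = (\<lambda>a. 0, \<lambda>a b. 0)"

definition nbasis :: "'a \<Rightarrow> ('a, 'k::field) nelem" where
  "nbasis i = (\<lambda>a. if a = i then 1 else 0, \<lambda>a b. 0)"

lemma ncarrierI:
  "(\<And>a. a \<notin> S \<Longrightarrow> v a = 0) \<Longrightarrow> (\<And>a b. m a b = - m b a) \<Longrightarrow>
   (\<And>a b. {a, b} \<notin> E \<Longrightarrow> m a b = 0) \<Longrightarrow> (v, m) \<in> ncarrier S E"
  unfolding ncarrier_def by blast

lemma ncarrierD:
  assumes "x \<in> ncarrier S E"
  shows "a \<notin> S \<Longrightarrow> fst x a = 0" and "snd x a b = - snd x b a"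
    and "{a, b} \<notin> E \<Longrightarrow> snd x a b = 0"
  using assms unfolding ncarrier_def mem_Collect_eq case_prod_unfold by blast+

lemma nzero_in_ncarrier: "nzero \<in> ncarrier S E"
  by (simp add: nzero_def ncarrier_def)

lemma nbasis_in_ncarrier: "i \<in> S \<Longrightarrow> nbasis i \<in> ncarrier S E"
  unfolding nbasis_def by (rule ncarrierI) auto

lemma nadd_in_ncarrier:
  assumes "x \<in> ncarrier S E" "y \<in> ncarrier S E"
  shows "nadd x y \<in> ncarrier S E"
  unfolding nadd_def
proof (rule ncarrierI)
  show "snd x a b + snd y a b = - (snd x b a + snd y b a)" for a b
    using ncarrierD(2)[OF assms(1), of a b] ncarrierD(2)[OF assms(2), of a b] by simp
qed (simp_all add: ncarrierD(1,3)[OF assms(1)] ncarrierD(1,3)[OF assms(2)])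

lemma nsmul_in_ncarrier:
  assumes "x \<in> ncarrier S E"
  shows "nsmul c x \<in> ncarrier S E"
  unfolding nsmul_def
proof (rule ncarrierI)
  show "c * snd x a b = - (c * snd x b a)" for a b
    using ncarrierD(2)[OF assms, of a b] by simp
qed (simp_all add: ncarrierD(1,3)[OF assms])

lemma nbracket_in_ncarrier: "nbracket E x y \<in> ncarrier S E"
  unfolding nbracket_def by (rule ncarrierI) (auto simp: insert_commute)

lemma nsmul_zero_left: "nsmul 0 x = nzero"
  by (simp add: nsmul_def nzero_def)

lemma nbracket_self: "nbracket E x x = nzero"
  unfolding nbracket_def nzero_def by (simp add: mult.commute fun_eq_iff)

lemma nbracket_nbasis_entry:
  assumes "{p, q} \<in> E" "a \<noteq> b"
  shows "snd (nbracket E (nbasis a) (nbasis b) :: ('a, 'k::field) nelem) p q =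
           (if p = a \<and> q = b then 1 else if p = b \<and> q = a then -1 else 0)"
  using assms unfolding nbracket_def nbasis_def by auto

text \<open>\<open>c = d\<close> is allowed, which covers graphs with a single edge.\<close>

lemma nbracket_eq_edge_combination:
  assumes "E \<subseteq> {{a, b}, {c, d}}" "a \<noteq> b" "{a, b} \<noteq> {c, d}"
  shows "nbracket E x y =
           nadd (nsmul (fst x a * fst y b - fst x b * fst y a) (nbracket E (nbasis a) (nbasis b)))
                (nsmul (fst x c * fst y d - fst x d * fst y c) (nbracket E (nbasis c) (nbasis d)))"
    (is "_ = ?rhs")
proof -
  have "snd (nbracket E x y) p q = snd ?rhs p q" for p q
  proof (cases "{p, q} \<in> E")
    case True
    then have "{p, q} = {a, b} \<or> {p, q} = {c, d}"
      using assms(1) by blast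
    then show ?thesis
      using True assms(2,3) unfolding nbracket_def nadd_def nsmul_def nbasis_def
      by (auto simp: doubleton_eq_iff algebra_simps)
  qed (simp add: nbracket_def nadd_def nsmul_def)
  then show ?thesis
    by (simp add: prod_eq_iff fun_eq_iff nbracket_def nadd_def nsmul_def)
qed

section \<open>Simple graphs\<close>

lemma simple_graph_edgeD: "simple_graph S E \<Longrightarrow> {a, b} \<in> E \<Longrightarrow> a \<in> S \<and> b \<in> S \<and> a \<noteq> b"
  unfolding simple_graph_def by (auto simp: doubleton_eq_iff)

lemma simple_graph_edgeE:
  assumes "simple_graph S E" "e \<in> E"
  obtains a b where "e = {a, b}" "a \<in> S" "b \<in> S" "a \<noteq> b"
  using assms unfolding simple_graph_def by blast

lemma simple_graph_edge_subset: "simple_graph S E \<Longrightarrow> e \<in> E \<Longrightarrow> e \<subseteq> S"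
  unfolding simple_graph_def by auto

lemma simple_graph_finite_edges: "simple_graph S E \<Longrightarrow> finite E"
  using simple_graph_edge_subset finite_subset[of E "Pow S"] unfolding simple_graph_def by blast

lemma simple_graph_empty: "finite S \<Longrightarrow> simple_graph S {}"
  unfolding simple_graph_def by simp

lemma simple_graph_insert_edge:
  "simple_graph S E \<Longrightarrow> a \<in> S \<Longrightarrow> b \<in> S \<Longrightarrow> a \<noteq> b \<Longrightarrow> simple_graph S (insert {a, b} E)"
  unfolding simple_graph_def by blast

lemma simple_graph_card_edges_le:
  assumes "simple_graph S E"
  shows "card E \<le> card S choose 2"
proof -
  have "E \<subseteq> {B. B \<subseteq> S \<and> card B = 2}"
    using assms unfolding simple_graph_def by auto
  moreover have "finite S" using assms unfolding simple_graph_def by blast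
  ultimately show ?thesis
    using card_mono[of "{B. B \<subseteq> S \<and> card B = 2}" E] n_subsets[of S 2] by simp
qed

section \<open>Isomorphisms\<close>

definition lie_iso_map ::
  "(('a, 'k::field) nelem \<Rightarrow> ('a, 'k) nelem) \<Rightarrow> 'a set \<Rightarrow> 'a set set \<Rightarrow> 'a set \<Rightarrow> 'a set set \<Rightarrow> bool"
where
  "lie_iso_map f S1 E1 S2 E2 \<longleftrightarrow>
     bij_betw f (ncarrier S1 E1) (ncarrier S2 E2) \<and>
     (\<forall>x\<in>ncarrier S1 E1. \<forall>y\<in>ncarrier S1 E1. f (nadd x y) = nadd (f x) (f y)) \<and>
     (\<forall>c. \<forall>x\<in>ncarrier S1 E1. f (nsmul c x) = nsmul c (f x)) \<and>
     (\<forall>x\<in>ncarrier S1 E1. \<forall>y\<in>ncarrier S1 E1. f (nbracket E1 x y) = nbracket E2 (f x) (f y))"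

lemma lie_iso_iff_map:
  "lie_iso TYPE('k::field) S1 E1 S2 E2 \<longleftrightarrow> (\<exists>f :: ('a, 'k) nelem \<Rightarrow> _. lie_iso_map f S1 E1 S2 E2)"
  unfolding lie_iso_def lie_iso_map_def ..

lemma lie_iso_mapD:
  assumes "lie_iso_map f S1 E1 S2 E2"
  shows "bij_betw f (ncarrier S1 E1) (ncarrier S2 E2)"
    and "x \<in> ncarrier S1 E1 \<Longrightarrow> y \<in> ncarrier S1 E1 \<Longrightarrow> f (nadd x y) = nadd (f x) (f y)"
    and "x \<in> ncarrier S1 E1 \<Longrightarrow> f (nsmul c x) = nsmul c (f x)"
    and "x \<in> ncarrier S1 E1 \<Longrightarrow> y \<in> ncarrier S1 E1 \<Longrightarrow> f (nbracket E1 x y) = nbracket E2 (f x) (f y)"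
    and "f nzero = nzero"
proof -
  show "x \<in> ncarrier S1 E1 \<Longrightarrow> f (nsmul c x) = nsmul c (f x)" for c x
    using assms unfolding lie_iso_map_def by blast
  from this[of nzero 0] show "f nzero = nzero"
    by (simp add: nzero_in_ncarrier nsmul_zero_left)
qed (use assms in \<open>auto simp: lie_iso_map_def\<close>)

lemma bij_betw_inv_into_hom:
  assumes f: "bij_betw f A B"
    and closed: "\<And>x y. x \<in> A \<Longrightarrow> y \<in> A \<Longrightarrow> p x y \<in> A"
    and hom: "\<And>x y. x \<in> A \<Longrightarrow> y \<in> A \<Longrightarrow> f (p x y) = q (f x) (f y)"
    and "x \<in> B" "y \<in> B"
  shows "inv_into A f (q x y) = p (inv_into A f x) (inv_into A f y)"
proof -
  let ?g = "inv_into A f"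
  have "?g x \<in> A" "?g y \<in> A"
    using assms(4,5) bij_betw_inv_into[OF f] bij_betwE by blast+
  moreover have "q x y = f (p (?g x) (?g y))"
    using hom[OF calculation] assms(4,5) f by (simp add: bij_betw_inv_into_right)
  ultimately show ?thesis
    using f closed by (simp add: bij_betw_def inv_into_f_f)
qed

lemma lie_iso_map_id: "lie_iso_map id S E S E"
  by (simp add: lie_iso_map_def)

lemma lie_iso_map_inv_into:
  assumes "lie_iso_map f S1 E1 S2 E2"
  shows "lie_iso_map (inv_into (ncarrier S1 E1) f) S2 E2 S1 E1"
proof -
  note f = lie_iso_mapD[OF assms]
  note inv_hom = bij_betw_inv_into_hom[OF f(1)]
  show ?thesis
    unfolding lie_iso_map_def
    using bij_betw_inv_into[OF f(1)]
      inv_hom[of nadd nadd, OF nadd_in_ncarrier f(2)]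
      inv_hom[of "\<lambda>x y. nsmul c x" "\<lambda>x y. nsmul c x" for c, OF nsmul_in_ncarrier f(3)]
      inv_hom[of "nbracket E1" "nbracket E2", OF nbracket_in_ncarrier f(4)]
    by blast
qed

lemma lie_iso_map_comp:
  assumes "lie_iso_map f S1 E1 S2 E2" "lie_iso_map g S2 E2 S3 E3"
  shows "lie_iso_map (g \<circ> f) S1 E1 S3 E3"
proof -
  have "f x \<in> ncarrier S2 E2" if "x \<in> ncarrier S1 E1" for x
    using lie_iso_mapD(1)[OF assms(1)] that bij_betwE by blast
  then show ?thesis
    using lie_iso_mapD[OF assms(1)] lie_iso_mapD[OF assms(2)]
    unfolding lie_iso_map_def by (auto intro: bij_betw_trans)
qed

lemma equiv_lie_iso:
  "equiv A {(g, h). g \<in> A \<and> h \<in> A \<and> lie_iso TYPE('k::field) (fst g) (snd g) (fst h) (snd h)}"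
  unfolding lie_iso_iff_map
  by (rule equivI; auto simp: refl_on_def sym_def trans_def
      intro: lie_iso_map_id lie_iso_map_inv_into lie_iso_map_comp)

definition nrelabel :: "('a \<Rightarrow> 'a) \<Rightarrow> 'a set \<Rightarrow> ('a, 'k::field) nelem \<Rightarrow> ('a, 'k) nelem" where
  "nrelabel \<tau> S x = (\<lambda>a. if a \<in> S then fst x (\<tau> a) else 0,
                     \<lambda>a b. if a \<in> S \<and> b \<in> S then snd x (\<tau> a) (\<tau> b) else 0)"

lemma nrelabel_in_ncarrier:
  assumes "\<And>a b. a \<in> S \<Longrightarrow> b \<in> S \<Longrightarrow> {\<tau> a, \<tau> b} \<in> E' \<Longrightarrow> {a, b} \<in> E"
    and "x \<in> ncarrier S' E'"
  shows "nrelabel \<tau> S x \<in> ncarrier S E"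
  unfolding nrelabel_def
proof (rule ncarrierI)
  show "(if a \<in> S \<and> b \<in> S then snd x (\<tau> a) (\<tau> b) else 0)
      = - (if b \<in> S \<and> a \<in> S then snd x (\<tau> b) (\<tau> a) else 0)" for a b
    using ncarrierD(2)[OF assms(2), of "\<tau> a" "\<tau> b"] by auto
qed (use assms ncarrierD(3)[OF assms(2)] in auto)

lemma nrelabel_nadd: "nrelabel \<tau> S (nadd x y) = nadd (nrelabel \<tau> S x) (nrelabel \<tau> S y)"
  by (simp add: nrelabel_def nadd_def fun_eq_iff)

lemma nrelabel_nsmul: "nrelabel \<tau> S (nsmul c x) = nsmul c (nrelabel \<tau> S x)"
  by (simp add: nrelabel_def nsmul_def fun_eq_iff)

lemma nrelabel_nbracket:
  assumes "simple_graph S E" and "\<And>a b. a \<in> S \<Longrightarrow> b \<in> S \<Longrightarrow> {\<tau> a, \<tau> b} \<in> E' \<longleftrightarrow> {a, b} \<in> E"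
  shows "nrelabel \<tau> S (nbracket E' x y) = nbracket E (nrelabel \<tau> S x) (nrelabel \<tau> S y)"
  using simple_graph_edgeD[OF assms(1)]
  by (auto simp: nrelabel_def nbracket_def fun_eq_iff assms(2))

lemma nrelabel_nrelabel:
  assumes "simple_graph S E" "\<And>a. a \<in> S \<Longrightarrow> \<sigma> a \<in> S' \<and> \<tau> (\<sigma> a) = a" "x \<in> ncarrier S E"
  shows "nrelabel \<sigma> S (nrelabel \<tau> S' x) = x"
proof -
  have "snd x a b = 0" if "\<not> (a \<in> S \<and> b \<in> S)" for a b
    using that ncarrierD(3)[OF assms(3)] simple_graph_edgeD[OF assms(1)] by blast
  then show ?thesis
    using assms(2) ncarrierD(1)[OF assms(3)] by (auto simp: nrelabel_def prod_eq_iff fun_eq_iff)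
qed

lemma simple_graph_image:
  assumes G: "simple_graph S E" and \<sigma>: "bij_betw \<sigma> S S'"
  shows "simple_graph S' ((\<lambda>e. \<sigma> ` e) ` E)"
proof -
  have "\<sigma> ` e \<in> {{a, b} | a b. a \<in> S' \<and> b \<in> S' \<and> a \<noteq> b}" if "e \<in> E" for e
  proof -
    obtain a b where e: "e = {a, b}" "a \<in> S" "b \<in> S" "a \<noteq> b"
      using simple_graph_edgeE[OF G \<open>e \<in> E\<close>] .
    then have "\<sigma> a \<in> S'" "\<sigma> b \<in> S'" "\<sigma> a \<noteq> \<sigma> b"
      using \<sigma> by (auto simp: bij_betw_def inj_on_def)
    then show ?thesis using e(1) by auto
  qed
  moreover have "finite S'"
    using G \<sigma> bij_betw_finite unfolding simple_graph_def by blast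
  ultimately show ?thesis by (simp add: simple_graph_def image_subset_iff)
qed

lemma simple_graph_image_edge_iff:
  assumes G: "simple_graph S E" and "inj_on \<sigma> S" "a \<in> S" "b \<in> S"
  shows "{\<sigma> a, \<sigma> b} \<in> (\<lambda>e. \<sigma> ` e) ` E \<longleftrightarrow> {a, b} \<in> E"
proof -
  have "\<sigma> ` e = \<sigma> ` {a, b} \<longleftrightarrow> e = {a, b}" if "e \<in> E" for e
    by (rule inj_on_image_eq_iff[OF \<open>inj_on \<sigma> S\<close>])
      (use simple_graph_edge_subset[OF G \<open>e \<in> E\<close>] \<open>a \<in> S\<close> \<open>b \<in> S\<close> in auto)
  moreover have "{\<sigma> a, \<sigma> b} \<in> (\<lambda>e. \<sigma> ` e) ` E \<longleftrightarrow> (\<exists>e\<in>E. \<sigma> ` e = \<sigma> ` {a, b})"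
    by auto
  ultimately show ?thesis by blast
qed

lemma lie_iso_of_bij_betw:
  assumes G: "simple_graph S E" and \<sigma>: "bij_betw \<sigma> S S'" and E': "E' = (\<lambda>e. \<sigma> ` e) ` E"
  shows "lie_iso TYPE('k::field) S E S' E'"
proof -
  define \<tau> where "\<tau> = inv_into S \<sigma>"
  have \<tau>: "bij_betw \<tau> S' S" unfolding \<tau>_def using \<sigma> by (rule bij_betw_inv_into)
  have \<sigma>\<tau>: "\<And>a. a \<in> S' \<Longrightarrow> \<tau> a \<in> S \<and> \<sigma> (\<tau> a) = a"
    using bij_betwE[OF \<tau>] bij_betw_inv_into_right[OF \<sigma>] unfolding \<tau>_def by simp
  have \<tau>\<sigma>: "\<And>a. a \<in> S \<Longrightarrow> \<sigma> a \<in> S' \<and> \<tau> (\<sigma> a) = a"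
    using bij_betwE[OF \<sigma>] bij_betw_inv_into_left[OF \<sigma>] unfolding \<tau>_def by simp
  have G': "simple_graph S' E'"
    unfolding E' using G \<sigma> by (rule simple_graph_image)
  have edges_\<sigma>: "{\<sigma> a, \<sigma> b} \<in> E' \<longleftrightarrow> {a, b} \<in> E" if "a \<in> S" "b \<in> S" for a b
    unfolding E' using G bij_betw_imp_inj_on[OF \<sigma>] that by (rule simple_graph_image_edge_iff)
  have edges_\<tau>: "{\<tau> a, \<tau> b} \<in> E \<longleftrightarrow> {a, b} \<in> E'" if "a \<in> S'" "b \<in> S'" for a b
    using edges_\<sigma>[of "\<tau> a" "\<tau> b"] \<sigma>\<tau>[OF that(1)] \<sigma>\<tau>[OF that(2)] by simp
  have relabel_\<tau>: "nrelabel \<tau> S' x \<in> ncarrier S' E'" if "x \<in> ncarrier S E" for x :: "('a, 'k) nelem"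
    using nrelabel_in_ncarrier[OF _ that] edges_\<tau> by blast
  have relabel_\<sigma>: "nrelabel \<sigma> S x \<in> ncarrier S E" if "x \<in> ncarrier S' E'" for x :: "('a, 'k) nelem"
    using nrelabel_in_ncarrier[OF _ that] edges_\<sigma> by blast
  have "bij_betw (nrelabel \<tau> S') (ncarrier S E) (ncarrier S' E' :: ('a, 'k) nelem set)"
    using nrelabel_nrelabel[OF G \<tau>\<sigma>] nrelabel_nrelabel[OF G' \<sigma>\<tau>] relabel_\<tau> relabel_\<sigma>
    by (intro bij_betw_byWitness[where f' = "nrelabel \<sigma> S"]) auto
  then show ?thesis
    unfolding lie_iso_iff_map lie_iso_map_def
    using nrelabel_nadd nrelabel_nsmul nrelabel_nbracket[OF G' edges_\<tau>] by blast
qed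

lemma bij_betw_extend:
  assumes "finite A" "finite B" "card A = card B" "A0 \<subseteq> A" "B0 \<subseteq> B" "bij_betw f A0 B0"
  obtains g where "bij_betw g A B" "\<And>x. x \<in> A0 \<Longrightarrow> g x = f x"
proof -
  have "card (A - A0) = card (B - B0)"
    using assms bij_betw_same_card[OF assms(6)] by (simp add: card_Diff_subset finite_subset)
  then obtain h where h: "bij_betw h (A - A0) (B - B0)"
    using finite_same_card_bij assms(1,2) by (metis finite_Diff)
  define g where "g x = (if x \<in> A0 then f x else h x)" for x
  have "bij_betw g A0 B0"
    using assms(6) by (rule bij_betw_cong[THEN iffD1, rotated]) (simp add: g_def)
  moreover have "bij_betw g (A - A0) (B - B0)"
    using h by (rule bij_betw_cong[THEN iffD1, rotated]) (simp add: g_def)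
  ultimately have "bij_betw g (A0 \<union> (A - A0)) (B0 \<union> (B - B0))"
    by (rule bij_betw_combine) blast
  moreover have "A0 \<union> (A - A0) = A" "B0 \<union> (B - B0) = B" using assms(4,5) by blast+
  ultimately show ?thesis using that by (simp add: g_def)
qed

lemma lie_iso_of_labelling:
  assumes G0: "simple_graph {..<length vs} E0"
    and vs: "distinct vs" "set vs \<subseteq> S" and "finite S"
    and E: "E = (\<lambda>e. (!) vs ` e) ` E0"
  shows "lie_iso TYPE('k::field) {..<card S} E0 S E"
proof -
  have len: "length vs \<le> card S"
    using card_mono[OF \<open>finite S\<close> vs(2)] distinct_card[OF vs(1)] by simp
  obtain \<sigma> where \<sigma>: "bij_betw \<sigma> {..<card S} S" "\<And>i. i \<in> {..<length vs} \<Longrightarrow> \<sigma> i = vs ! i"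
    by (rule bij_betw_extend[of "{..<card S}" S "{..<length vs}" "set vs" "(!) vs"])
      (use \<open>finite S\<close> vs len bij_betw_nth[OF vs(1) refl refl] in auto)
  have G: "simple_graph {..<card S} E0"
    using G0 len unfolding simple_graph_def by fastforce
  have "(!) vs ` e = \<sigma> ` e" if "e \<in> E0" for e
    using \<sigma>(2) simple_graph_edge_subset[OF G0 that] by (intro image_cong) auto
  then have "E = (\<lambda>e. \<sigma> ` e) ` E0"
    unfolding E by (rule image_cong[OF refl])
  then show ?thesis by (rule lie_iso_of_bij_betw[OF G \<sigma>(1)])
qed

section \<open>The derived algebra\<close>

text \<open>All brackets lie in the span of \<open>d\<close> elements. Only two spanning elements are available,
  so the predicate is meaningful for \<open>d \<le> 2\<close> only.\<close>

definition derived_dim_le :: "'k::field itself \<Rightarrow> 'a set \<Rightarrow> 'a set set \<Rightarrow> nat \<Rightarrow> bool" where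
  "derived_dim_le (TYPE('k)) S E d \<longleftrightarrow>
     (\<exists>z1 z2 :: ('a, 'k) nelem. z1 \<in> ncarrier S E \<and> z2 \<in> ncarrier S E \<and>
        (d = 0 \<longrightarrow> z1 = nzero) \<and> (d \<le> 1 \<longrightarrow> z2 = nzero) \<and>
        (\<forall>x\<in>ncarrier S E. \<forall>y\<in>ncarrier S E. \<exists>c1 c2.
            nbracket E x y = nadd (nsmul c1 z1) (nsmul c2 z2)))"

lemma derived_dim_le_mono:
  assumes "derived_dim_le TYPE('k::field) S E d" and "d \<le> d'"
  shows "derived_dim_le TYPE('k) S E d'"
proof -
  have "d' = 0 \<longrightarrow> d = 0" "d' \<le> 1 \<longrightarrow> d \<le> 1"
    using \<open>d \<le> d'\<close> by auto
  then show ?thesis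
    using assms(1) unfolding derived_dim_le_def by blast
qed

lemma lie_iso_map_derived_dim_le:
  fixes f :: "('a, 'k::field) nelem \<Rightarrow> ('a, 'k) nelem"
  assumes "lie_iso_map f S1 E1 S2 E2" and "derived_dim_le TYPE('k) S1 E1 d"
  shows "derived_dim_le TYPE('k) S2 E2 d"
proof -
  note f = lie_iso_mapD[OF assms(1)]
  obtain z1 z2 :: "('a, 'k) nelem" where z: "z1 \<in> ncarrier S1 E1" "z2 \<in> ncarrier S1 E1"
      "d = 0 \<longrightarrow> z1 = nzero" "d \<le> 1 \<longrightarrow> z2 = nzero"
    and span: "\<forall>x\<in>ncarrier S1 E1. \<forall>y\<in>ncarrier S1 E1. \<exists>c1 c2.
                  nbracket E1 x y = nadd (nsmul c1 z1) (nsmul c2 z2)"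
    using assms(2) unfolding derived_dim_le_def by blast
  have "\<exists>c1 c2. nbracket E2 x' y' = nadd (nsmul c1 (f z1)) (nsmul c2 (f z2))"
    if "x' \<in> ncarrier S2 E2" "y' \<in> ncarrier S2 E2" for x' y'
  proof -
    have "x' \<in> f ` ncarrier S1 E1" "y' \<in> f ` ncarrier S1 E1"
      using f(1) that by (simp_all add: bij_betw_def)
    then obtain x y where xy: "x \<in> ncarrier S1 E1" "y \<in> ncarrier S1 E1" "x' = f x" "y' = f y"
      by blast
    then obtain c1 c2 where "nbracket E1 x y = nadd (nsmul c1 z1) (nsmul c2 z2)"
      using span by blast
    then have "nbracket E2 x' y' = f (nadd (nsmul c1 z1) (nsmul c2 z2))"
      using f(4)[OF xy(1,2), symmetric] xy(3,4) by simp
    also have "\<dots> = nadd (nsmul c1 (f z1)) (nsmul c2 (f z2))"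
      using f(2)[OF nsmul_in_ncarrier[OF z(1)] nsmul_in_ncarrier[OF z(2)]] f(3) z(1,2) by simp
    finally show ?thesis by blast
  qed
  moreover have "f z1 \<in> ncarrier S2 E2" "f z2 \<in> ncarrier S2 E2"
    using f(1) z(1,2) bij_betwE by blast+
  ultimately show ?thesis
    unfolding derived_dim_le_def using z(3,4) f(5) by (intro exI[of _ "f z1"] exI[of _ "f z2"]) auto
qed

lemma lie_iso_derived_dim_le_iff:
  "lie_iso TYPE('k::field) S1 E1 S2 E2 \<Longrightarrow>
     derived_dim_le TYPE('k) S1 E1 d \<longleftrightarrow> derived_dim_le TYPE('k) S2 E2 d"
  unfolding lie_iso_iff_map using lie_iso_map_derived_dim_le lie_iso_map_inv_into by blast

lemma simple_graph_at_most_two_edges: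
  assumes G: "simple_graph S E" and "E \<noteq> {}" "card E \<le> 2"
  obtains a b c d where "E \<subseteq> {{a, b}, {c, d}}" "a \<noteq> b" "{a, b} \<noteq> {c, d}"
    "card E = 1 \<Longrightarrow> c = a \<and> d = a"
proof -
  have "card E \<noteq> 0" using simple_graph_finite_edges[OF G] assms(2) by simp
  then consider "card E = 1" | "card E = 2" using assms(3) by linarith
  then show thesis
  proof cases
    case 1
    then obtain e where e: "E = {e}" by (auto simp: card_1_singleton_iff)
    obtain a b where "e = {a, b}" "a \<noteq> b"
      using simple_graph_edgeE[OF G, of e] e by blast
    then show thesis by (intro that[of a b a a]) (auto simp: e doubleton_eq_iff)
  next
    case 2
    then obtain e1 e2 where e: "E = {e1, e2}" "e1 \<noteq> e2" by (auto simp: card_2_iff)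
    obtain a b where ab: "e1 = {a, b}" "a \<noteq> b"
      using simple_graph_edgeE[OF G, of e1] e by blast
    obtain c d where cd: "e2 = {c, d}"
      using simple_graph_edgeE[OF G, of e2] e by blast
    show thesis
    proof (rule that[of a b c d])
      show "E \<subseteq> {{a, b}, {c, d}}" "a \<noteq> b" "{a, b} \<noteq> {c, d}"
        using e ab cd by auto
      show "card E = 1 \<Longrightarrow> c = a \<and> d = a" using 2 by simp
    qed
  qed
qed

lemma derived_dim_le_card_edges:
  assumes G: "simple_graph S E" and "card E \<le> 2"
  shows "derived_dim_le TYPE('k::field) S E (card E)"
proof (cases "E = {}")
  case True
  have "\<forall>x y. \<exists>c1 c2. nbracket E x y = nadd (nsmul c1 nzero) (nsmul c2 (nzero :: ('a, 'k) nelem))"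
    by (simp add: True nbracket_def nadd_def nsmul_def nzero_def)
  then show ?thesis
    unfolding derived_dim_le_def by (intro exI[of _ nzero]) (use nzero_in_ncarrier in blast)
next
  case False
  then obtain a b c d where edges: "E \<subseteq> {{a, b}, {c, d}}" "a \<noteq> b" "{a, b} \<noteq> {c, d}"
    "card E = 1 \<Longrightarrow> c = a \<and> d = a"
    using simple_graph_at_most_two_edges[OF G _ \<open>card E \<le> 2\<close>] by blast
  let ?z1 = "nbracket E (nbasis a) (nbasis b) :: ('a, 'k) nelem"
  let ?z2 = "nbracket E (nbasis c) (nbasis d) :: ('a, 'k) nelem"
  have nonzero: "card E \<noteq> 0"
    using simple_graph_finite_edges[OF G] False by simp
  then have z2: "card E \<le> 1 \<longrightarrow> ?z2 = nzero"
    using edges(4) nbracket_self by (metis le_neq_implies_less less_one)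
  have span: "\<forall>x y. \<exists>c1 c2. nbracket E x y = nadd (nsmul c1 ?z1) (nsmul c2 ?z2)"
    using nbracket_eq_edge_combination[OF edges(1-3)] by blast
  show ?thesis
    unfolding derived_dim_le_def
    by (rule exI[of _ ?z1], rule exI[of _ ?z2]) (use nonzero z2 span nbracket_in_ncarrier in blast)
qed

lemma derived_dim_le_nbasis_brackets:
  assumes G: "simple_graph S E" and "derived_dim_le TYPE('k) S E d"
  obtains z1 z2 :: "('a, 'k::field) nelem" and u w :: "'a \<Rightarrow> 'a \<Rightarrow> 'k"
  where "d = 0 \<Longrightarrow> z1 = nzero" and "d \<le> 1 \<Longrightarrow> z2 = nzero"
    and "\<And>a b. {a, b} \<in> E \<Longrightarrow>
           nbracket E (nbasis a) (nbasis b) = nadd (nsmul (u a b) z1) (nsmul (w a b) z2)"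
proof -
  obtain z1 z2 :: "('a, 'k) nelem" where z: "d = 0 \<longrightarrow> z1 = nzero" "d \<le> 1 \<longrightarrow> z2 = nzero"
    and span: "\<forall>x\<in>ncarrier S E. \<forall>y\<in>ncarrier S E. \<exists>c1 c2.
                 nbracket E x y = nadd (nsmul c1 z1) (nsmul c2 z2)"
    using assms(2) unfolding derived_dim_le_def by blast
  have "\<exists>c1 c2. {a, b} \<in> E \<longrightarrow>
          nbracket E (nbasis a) (nbasis b) = nadd (nsmul c1 z1) (nsmul c2 z2)" for a b
  proof (cases "{a, b} \<in> E")
    case True
    then have "nbasis a \<in> ncarrier S E" "nbasis b \<in> ncarrier S E"
      using simple_graph_edgeD[OF G True] by (simp_all add: nbasis_in_ncarrier)
    then show ?thesis using span by blast
  qed simp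
  then obtain u w where "\<And>a b. {a, b} \<in> E \<Longrightarrow>
      nbracket E (nbasis a) (nbasis b) = nadd (nsmul (u a b) z1) (nsmul (w a b) z2)"
    by metis
  with z show thesis by (intro that) auto
qed

text \<open>Reading \<open>[e\<^sub>a, e\<^sub>b] = u z\<^sub>1 + w z\<^sub>2\<close> off at the edges factors the identity matrix
  indexed by the edges through \<open>k\<^sup>d\<close>.\<close>

lemma derived_dim_le_edge_factorisation:
  assumes G: "simple_graph S E" and "derived_dim_le TYPE('k) S E d"
  obtains u w P Q :: "'a \<Rightarrow> 'a \<Rightarrow> 'k::field" where
    "\<And>a b. {a, b} \<in> E \<Longrightarrow> a \<noteq> b \<Longrightarrow> u a b * P a b + w a b * Q a b = 1"
    and "\<And>a b p q. {a, b} \<in> E \<Longrightarrow> {p, q} \<in> E \<Longrightarrow> a \<noteq> b \<Longrightarrow> {a, b} \<noteq> {p, q} \<Longrightarrow>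
           u a b * P p q + w a b * Q p q = 0"
    and "d = 0 \<Longrightarrow> P = (\<lambda>_ _. 0)" and "d \<le> 1 \<Longrightarrow> Q = (\<lambda>_ _. 0)"
proof -
  obtain z1 z2 :: "('a, 'k) nelem" and u w where z: "d = 0 \<Longrightarrow> z1 = nzero" "d \<le> 1 \<Longrightarrow> z2 = nzero"
    and uw: "\<And>a b. {a, b} \<in> E \<Longrightarrow>
           nbracket E (nbasis a) (nbasis b) = nadd (nsmul (u a b) z1) (nsmul (w a b) z2)"
    using derived_dim_le_nbasis_brackets[OF assms] by blast
  have entry: "u a b * snd z1 p q + w a b * snd z2 p q =
      (if p = a \<and> q = b then 1 else if p = b \<and> q = a then -1 else 0)"
    if "{a, b} \<in> E" "{p, q} \<in> E" "a \<noteq> b" for a b p q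
  proof -
    have "u a b * snd z1 p q + w a b * snd z2 p q =
        snd (nadd (nsmul (u a b) z1) (nsmul (w a b) z2)) p q"
      by (simp add: nadd_def nsmul_def)
    also have "\<dots> = snd (nbracket E (nbasis a) (nbasis b)) p q"
      by (simp only: uw[OF \<open>{a, b} \<in> E\<close>])
    also have "\<dots> = (if p = a \<and> q = b then 1 else if p = b \<and> q = a then -1 else 0)"
      by (rule nbracket_nbasis_entry[OF \<open>{p, q} \<in> E\<close> \<open>a \<noteq> b\<close>])
    finally show ?thesis .
  qed
  show ?thesis
  proof (rule that[where u = u and w = w and P = "snd z1" and Q = "snd z2"])
    show "u a b * snd z1 a b + w a b * snd z2 a b = 1" if "{a, b} \<in> E" "a \<noteq> b" for a b
      using entry[OF that(1,1,2)] by simp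
    show "u a b * snd z1 p q + w a b * snd z2 p q = 0"
      if "{a, b} \<in> E" "{p, q} \<in> E" "a \<noteq> b" "{a, b} \<noteq> {p, q}" for a b p q
    proof -
      have "\<not> (p = a \<and> q = b)" "\<not> (p = b \<and> q = a)"
        using that(4) by auto
      then show ?thesis using entry[OF that(1-3)] by simp
    qed
  qed (use z in \<open>simp_all add: nzero_def fun_eq_iff\<close>)
qed

lemma not_derived_dim_le_0:
  assumes G: "simple_graph S E" and "e \<in> E"
  shows "\<not> derived_dim_le TYPE('k::field) S E 0"
proof
  assume "derived_dim_le TYPE('k) S E 0"
  then show False
  proof (rule derived_dim_le_edge_factorisation[OF G])
    fix u w P Q :: "'a \<Rightarrow> 'a \<Rightarrow> 'k"
    assume diag: "\<And>a b. {a, b} \<in> E \<Longrightarrow> a \<noteq> b \<Longrightarrow> u a b * P a b + w a b * Q a b = 1"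
      and "(0::nat) = 0 \<Longrightarrow> P = (\<lambda>_ _. 0)" "(0::nat) \<le> 1 \<Longrightarrow> Q = (\<lambda>_ _. 0)"
    then have "P = (\<lambda>_ _. 0)" "Q = (\<lambda>_ _. 0)" by simp_all
    obtain a b where "e = {a, b}" "a \<noteq> b"
      using simple_graph_edgeE[OF G \<open>e \<in> E\<close>] by blast
    with diag[of a b] show False
      using \<open>e \<in> E\<close> \<open>P = _\<close> \<open>Q = _\<close> by simp
  qed
qed

lemma not_derived_dim_le_1:
  assumes G: "simple_graph S E" and "e1 \<in> E" "e2 \<in> E" "e1 \<noteq> e2"
  shows "\<not> derived_dim_le TYPE('k::field) S E 1"
proof
  assume "derived_dim_le TYPE('k) S E 1"
  then show False
  proof (rule derived_dim_le_edge_factorisation[OF G])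
    fix u w P Q :: "'a \<Rightarrow> 'a \<Rightarrow> 'k"
    assume diag: "\<And>a b. {a, b} \<in> E \<Longrightarrow> a \<noteq> b \<Longrightarrow> u a b * P a b + w a b * Q a b = 1"
      and off: "\<And>a b p q. {a, b} \<in> E \<Longrightarrow> {p, q} \<in> E \<Longrightarrow> a \<noteq> b \<Longrightarrow> {a, b} \<noteq> {p, q} \<Longrightarrow>
                  u a b * P p q + w a b * Q p q = 0"
      and "(1::nat) \<le> 1 \<Longrightarrow> Q = (\<lambda>_ _. 0)"
    then have Q: "Q = (\<lambda>_ _. 0)" by simp
    obtain a b c d where "e1 = {a, b}" "a \<noteq> b" "e2 = {c, d}" "c \<noteq> d"
      using simple_graph_edgeE[OF G] assms(2,3) by metis
    then have "u a b * P a b = 1" "u a b * P c d = 0" "u c d * P a b = 0" "u c d * P c d = 1"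
      using diag off assms(2-4) Q by auto
    then have "(1::'k) = (u a b * P c d) * (u c d * P a b)"
      by (metis mult.commute mult.left_commute mult_1_right)
    then show False using \<open>u a b * P c d = 0\<close> by simp
  qed
qed

lemma identity3_not_rank_two:
  fixes u1 u2 u3 w1 w2 w3 p1 p2 p3 q1 q2 q3 :: "'k::field"
  assumes "u1*p1 + w1*q1 = 1" "u1*p2 + w1*q2 = 0" "u1*p3 + w1*q3 = 0"
    "u2*p1 + w2*q1 = 0" "u2*p2 + w2*q2 = 1" "u2*p3 + w2*q3 = 0"
    "u3*p1 + w3*q1 = 0" "u3*p2 + w3*q2 = 0" "u3*p3 + w3*q3 = 1"
  shows False
proof -
  \<comment> \<open>\<open>(u\<^sub>i p\<^sub>j + w\<^sub>i q\<^sub>j)\<close> is a product of a \<open>3 \<times> 2\<close> and a \<open>2 \<times> 3\<close> matrix, so its determinant vanishes.\<close>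
  have "(u1*p1 + w1*q1) * ((u2*p2 + w2*q2) * (u3*p3 + w3*q3) - (u2*p3 + w2*q3) * (u3*p2 + w3*q2))
      - (u1*p2 + w1*q2) * ((u2*p1 + w2*q1) * (u3*p3 + w3*q3) - (u2*p3 + w2*q3) * (u3*p1 + w3*q1))
      + (u1*p3 + w1*q3) * ((u2*p1 + w2*q1) * (u3*p2 + w3*q2) - (u2*p2 + w2*q2) * (u3*p1 + w3*q1)) = 0"
    by (simp add: algebra_simps)
  then show False using assms by simp
qed

lemma not_derived_dim_le_2:
  assumes G: "simple_graph S E" and "e1 \<in> E" "e2 \<in> E" "e3 \<in> E"
    and "e1 \<noteq> e2" "e1 \<noteq> e3" "e2 \<noteq> e3"
  shows "\<not> derived_dim_le TYPE('k::field) S E 2"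
proof
  assume "derived_dim_le TYPE('k) S E 2"
  then show False
  proof (rule derived_dim_le_edge_factorisation[OF G])
    fix u w P Q :: "'a \<Rightarrow> 'a \<Rightarrow> 'k"
    assume diag: "\<And>a b. {a, b} \<in> E \<Longrightarrow> a \<noteq> b \<Longrightarrow> u a b * P a b + w a b * Q a b = 1"
      and off: "\<And>a b p q. {a, b} \<in> E \<Longrightarrow> {p, q} \<in> E \<Longrightarrow> a \<noteq> b \<Longrightarrow> {a, b} \<noteq> {p, q} \<Longrightarrow>
                  u a b * P p q + w a b * Q p q = 0"
    obtain a1 b1 a2 b2 a3 b3 where e: "e1 = {a1, b1}" "e2 = {a2, b2}" "e3 = {a3, b3}"
      and "a1 \<noteq> b1" "a2 \<noteq> b2" "a3 \<noteq> b3"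
      using simple_graph_edgeE[OF G] assms(2-4) by metis
    then show False
      using identity3_not_rank_two[of "u a1 b1" "P a1 b1" "w a1 b1" "Q a1 b1" "P a2 b2" "Q a2 b2"
          "P a3 b3" "Q a3 b3" "u a2 b2" "w a2 b2" "u a3 b3" "w a3 b3"]
        diag off assms(2-7) by auto
  qed
qed

lemma derived_dim_le_iff_card_edges:
  assumes G: "simple_graph S E" and "d \<le> 2"
  shows "derived_dim_le TYPE('k::field) S E d \<longleftrightarrow> card E \<le> d"
proof
  assume "card E \<le> d"
  then show "derived_dim_le TYPE('k) S E d"
    using derived_dim_le_mono[OF derived_dim_le_card_edges[OF G]] \<open>d \<le> 2\<close> by simp
next
  assume dim: "derived_dim_le TYPE('k) S E d"
  show "card E \<le> d"
  proof (rule ccontr)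
    assume "\<not> card E \<le> d"
    then obtain T where T: "T \<subseteq> E" "card T = Suc d"
      by (metis not_less_eq_eq obtain_subset_with_card_n)
    consider "d = 0" | "d = 1" | "d = 2" using \<open>d \<le> 2\<close> by linarith
    then show False
    proof cases
      case 1
      then obtain e where "T = {e}" using T(2) by (auto simp: card_1_singleton_iff)
      then show False using not_derived_dim_le_0[OF G] dim T(1) 1 by blast
    next
      case 2
      then have "card T = 2" using T(2) by simp
      then obtain e1 e2 where "T = {e1, e2}" "e1 \<noteq> e2" using card_2_iff[of T] by blast
      then show False using not_derived_dim_le_1[OF G] dim T(1) 2 by blast
    next
      case 3
      then have "card T = 3" using T(2) by simp
      then obtain e1 e2 e3 where "T = {e1, e2, e3}" "e1 \<noteq> e2" "e1 \<noteq> e3" "e2 \<noteq> e3"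
        using card_3_iff[of T] by blast
      moreover from this(1) have "e1 \<in> E" "e2 \<in> E" "e3 \<in> E" using T(1) by auto
      ultimately show False using not_derived_dim_le_2[OF G, where 'k = 'k] dim 3 by blast
    qed
  qed
qed

lemma lie_iso_card_edges_le_iff:
  assumes "simple_graph S1 E1" "simple_graph S2 E2" "lie_iso TYPE('k::field) S1 E1 S2 E2" "d \<le> 2"
  shows "card E1 \<le> d \<longleftrightarrow> card E2 \<le> d"
  using derived_dim_le_iff_card_edges[OF assms(1) assms(4), where 'k = 'k]
    derived_dim_le_iff_card_edges[OF assms(2) assms(4), where 'k = 'k]
    lie_iso_derived_dim_le_iff[OF assms(3)] by simp

lemma lie_iso_min_card_edges:
  assumes "simple_graph S1 E1" "simple_graph S2 E2" "lie_iso TYPE('k::field) S1 E1 S2 E2"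
  shows "min (card E1) 3 = min (card E2) 3"
  using lie_iso_card_edges_le_iff[OF assms, of 0] lie_iso_card_edges_le_iff[OF assms, of 1]
    lie_iso_card_edges_le_iff[OF assms, of 2] by linarith

section \<open>Central elements that are not brackets\<close>

definition has_central_non_bracket :: "'k::field itself \<Rightarrow> 'a set \<Rightarrow> 'a set set \<Rightarrow> bool" where
  "has_central_non_bracket (TYPE('k)) S E \<longleftrightarrow>
     (\<exists>z :: ('a, 'k) nelem. z \<in> ncarrier S E \<and>
        (\<forall>y\<in>ncarrier S E. nbracket E z y = nzero) \<and>
        (\<forall>x\<in>ncarrier S E. \<forall>y\<in>ncarrier S E. nbracket E x y \<noteq> z))"

lemma lie_iso_map_central_non_bracket:
  fixes f :: "('a, 'k::field) nelem \<Rightarrow> ('a, 'k) nelem"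
  assumes "lie_iso_map f S1 E1 S2 E2" and "has_central_non_bracket TYPE('k) S1 E1"
  shows "has_central_non_bracket TYPE('k) S2 E2"
proof -
  note f = lie_iso_mapD[OF assms(1)]
  obtain z :: "('a, 'k) nelem" where z: "z \<in> ncarrier S1 E1"
    and central: "\<forall>y\<in>ncarrier S1 E1. nbracket E1 z y = nzero"
    and non_bracket: "\<forall>x\<in>ncarrier S1 E1. \<forall>y\<in>ncarrier S1 E1. nbracket E1 x y \<noteq> z"
    using assms(2) unfolding has_central_non_bracket_def by blast
  have onto: "ncarrier S2 E2 = f ` ncarrier S1 E1" and inj: "inj_on f (ncarrier S1 E1)"
    using f(1) by (simp_all add: bij_betw_def)
  have "f z \<in> ncarrier S2 E2" using z onto by blast
  moreover have "nbracket E2 (f z) (f y) = nzero" if "y \<in> ncarrier S1 E1" for y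
    using f(4)[OF z that] f(5) central that by simp
  moreover have "nbracket E2 (f x) (f y) \<noteq> f z" if "x \<in> ncarrier S1 E1" "y \<in> ncarrier S1 E1" for x y
    using f(4)[OF that] inj_onD[OF inj _ nbracket_in_ncarrier z] non_bracket that by metis
  ultimately show ?thesis
    unfolding has_central_non_bracket_def onto by blast
qed

lemma lie_iso_central_non_bracket_iff:
  "lie_iso TYPE('k::field) S1 E1 S2 E2 \<Longrightarrow>
     has_central_non_bracket TYPE('k) S1 E1 \<longleftrightarrow> has_central_non_bracket TYPE('k) S2 E2"
  unfolding lie_iso_iff_map
  using lie_iso_map_central_non_bracket lie_iso_map_inv_into by blast

lemma isolated_vertex_central_non_bracket:
  assumes "v \<in> S" and "\<forall>e\<in>E. v \<notin> e"
  shows "has_central_non_bracket TYPE('k::field) S E"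
proof -
  have "nbracket E (nbasis v) y = (nzero :: ('a, 'k) nelem)" for y :: "('a, 'k) nelem"
    using assms(2) by (auto simp: nbracket_def nbasis_def nzero_def fun_eq_iff)
  moreover have "nbracket E x y \<noteq> (nbasis v :: ('a, 'k) nelem)" for x y
  proof
    assume "nbracket E x y = nbasis v"
    then have "fst (nbracket E x y) v = fst (nbasis v :: ('a, 'k) nelem) v" by simp
    then show False by (simp add: nbracket_def nbasis_def)
  qed
  ultimately show ?thesis
    unfolding has_central_non_bracket_def using nbasis_in_ncarrier[OF assms(1)] by blast
qed

lemma two_disjoint_edges_central_vertex_part:
  fixes z :: "(nat, 'k::field) nelem"
  assumes z: "z \<in> ncarrier {..<4} {{0, 1}, {2, 3}}"
    and central: "\<forall>y\<in>ncarrier {..<4} {{0, 1}, {2, 3}}. nbracket {{0, 1}, {2, 3}} z y = nzero"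
  shows "fst z = (\<lambda>a. 0)"
proof -
  have "snd (nbracket {{0, 1}, {2, 3}} z (nbasis i)) a b = 0" if "i < 4" for i a b
  proof -
    have "i \<in> {..<4}" using that by simp
    then show ?thesis
      using central[rule_format, OF nbasis_in_ncarrier] by (simp add: nzero_def)
  qed
  from this[of 1 0 1] this[of 0 0 1] this[of 3 2 3] this[of 2 2 3]
  have z_entries: "fst z 0 = 0" "fst z 1 = 0" "fst z 2 = 0" "fst z 3 = 0"
    by (simp_all add: nbracket_def nbasis_def)
  have "fst z a = 0" for a
  proof (cases "a < 4")
    case True
    then have "a = 0 \<or> a = 1 \<or> a = 2 \<or> a = 3" by auto
    then show ?thesis using z_entries by auto
  qed (use ncarrierD(1)[OF z] in simp)
  then show ?thesis by (simp add: fun_eq_iff)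
qed

lemma two_disjoint_edges_central_is_bracket:
  fixes z :: "(nat, 'k::field) nelem"
  assumes z: "z \<in> ncarrier {..<4} {{0, 1}, {2, 3}}"
    and central: "\<forall>y\<in>ncarrier {..<4} {{0, 1}, {2, 3}}. nbracket {{0, 1}, {2, 3}} z y = nzero"
  shows "\<exists>x\<in>ncarrier {..<4} {{0, 1}, {2, 3}}. \<exists>y\<in>ncarrier {..<4} {{0, 1}, {2, 3}}.
           nbracket {{0, 1}, {2, 3}} x y = z"
    (is "\<exists>x\<in>ncarrier ?S ?E. \<exists>y\<in>_. _")
proof -
  \<comment> \<open>Pair the first endpoints, weighted by the coordinates of \<open>z\<close>, with the second ones.\<close>
  define x :: "(nat, 'k) nelem" where
    "x = (\<lambda>a. if a = 0 then snd z 0 1 else if a = 2 then snd z 2 3 else 0, \<lambda>a b. 0)"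
  define y :: "(nat, 'k) nelem" where "y = (\<lambda>a. if a = 1 \<or> a = 3 then 1 else 0, \<lambda>a b. 0)"
  have "x \<in> ncarrier ?S ?E" "y \<in> ncarrier ?S ?E"
    unfolding x_def y_def by (auto intro!: ncarrierI split: if_splits)
  moreover have "nbracket ?E x y = z"
  proof (rule prod_eqI)
    show "fst (nbracket ?E x y) = fst z"
      using two_disjoint_edges_central_vertex_part[OF assms] by (simp add: nbracket_def)
    have "snd (nbracket ?E x y) a b = snd z a b" for a b
    proof (cases "{a, b} \<in> ?E")
      case True
      then have "(a = 0 \<and> b = 1) \<or> (a = 1 \<and> b = 0) \<or> (a = 2 \<and> b = 3) \<or> (a = 3 \<and> b = 2)"
        by (auto simp: doubleton_eq_iff)
      moreover have "snd z 1 0 = - snd z 0 1" "snd z 3 2 = - snd z 2 3"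
        using ncarrierD(2)[OF z] by blast+
      ultimately show ?thesis
        using True unfolding nbracket_def x_def y_def by (elim disjE) simp_all
    next
      case False
      then show ?thesis using ncarrierD(3)[OF z, of a b] by (simp add: nbracket_def)
    qed
    then show "snd (nbracket ?E x y) = snd z" by (simp add: fun_eq_iff)
  qed
  ultimately show ?thesis by (intro bexI)
qed

lemma two_disjoint_edges_no_central_non_bracket:
  "\<not> has_central_non_bracket TYPE('k::field) {..<4::nat} {{0, 1}, {2, 3}}"
proof
  assume "has_central_non_bracket TYPE('k) {..<4::nat} {{0, 1}, {2, 3}}"
  then obtain z :: "(nat, 'k) nelem" where z: "z \<in> ncarrier {..<4} {{0, 1}, {2, 3}}"
    and central: "\<forall>y\<in>ncarrier {..<4} {{0, 1}, {2, 3}}. nbracket {{0, 1}, {2, 3}} z y = nzero"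
    and non_bracket: "\<forall>x\<in>ncarrier {..<4} {{0, 1}, {2, 3}}. \<forall>y\<in>ncarrier {..<4} {{0, 1}, {2, 3}}.
                         nbracket {{0, 1}, {2, 3}} x y \<noteq> z"
    unfolding has_central_non_bracket_def by blast
  from two_disjoint_edges_central_is_bracket[OF z central] non_bracket show False
    by blast
qed

section \<open>Graphs with \<open>|S| + |E| = 6\<close>\<close>

lemma path_of_adjacent_edges:
  assumes "a \<noteq> b" "c \<noteq> d" "{a, b} \<noteq> {c, d}" "{a, b} \<inter> {c, d} \<noteq> {}"
  obtains p q r where "distinct [p, q, r]" "{{a, b}, {c, d}} = {{p, q}, {q, r}}"
proof -
  consider "a = c" | "a = d" | "b = c" | "b = d" using assms(4) by blast
  then show thesis
  proof cases
    case 1 show thesis by (rule that[of b a d]) (use 1 assms in \<open>auto simp: insert_commute\<close>)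
  next
    case 2 show thesis by (rule that[of b a c]) (use 2 assms in \<open>auto simp: insert_commute\<close>)
  next
    case 3 show thesis by (rule that[of a b d]) (use 3 assms in \<open>auto simp: insert_commute\<close>)
  next
    case 4 show thesis by (rule that[of a b c]) (use 4 assms in \<open>auto simp: insert_commute\<close>)
  qed
qed

lemma lie_iso_edgeless: "finite S \<Longrightarrow> lie_iso TYPE('k::field) {..<card S} {} S {}"
  by (rule lie_iso_of_labelling[of "[]"]) (auto intro: simple_graph_empty)

lemma lie_iso_single_edge:
  assumes G: "simple_graph S E" and "card E = 1"
  shows "lie_iso TYPE('k::field) {..<card S} {{0, 1}} S E"
proof -
  obtain e where "E = {e}" using \<open>card E = 1\<close> by (auto simp: card_1_singleton_iff)
  moreover obtain a b where "e = {a, b}" "a \<in> S" "b \<in> S" "a \<noteq> b"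
    using simple_graph_edgeE[OF G] calculation by blast
  ultimately show ?thesis
    using G unfolding simple_graph_def
    by (intro lie_iso_of_labelling[of "[a, b]"]) (auto intro!: simple_graph_insert_edge simple_graph_empty)
qed

lemma lie_iso_two_edges:
  assumes G: "simple_graph S E" and "card E = 2"
  shows "lie_iso TYPE('k::field) {..<card S} {{0, 1}, {1, 2}} S E \<or>
         lie_iso TYPE('k) {..<card S} {{0, 1}, {2, 3}} S E"
proof -
  have "finite S" using G unfolding simple_graph_def by blast
  obtain e1 e2 where E: "E = {e1, e2}" "e1 \<noteq> e2"
    using card_2_iff[of E] \<open>card E = 2\<close> by blast
  obtain a b a' b' where ab: "e1 = {a, b}" "a \<in> S" "b \<in> S" "a \<noteq> b"
    and ab': "e2 = {a', b'}" "a' \<in> S" "b' \<in> S" "a' \<noteq> b'"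
    using simple_graph_edgeE[OF G] E(1) by (metis insertCI)
  show ?thesis
  proof (cases "{a, b} \<inter> {a', b'} = {}")
    case True
    then have "lie_iso TYPE('k) {..<card S} {{0, 1}, {2, 3}} S E"
      using \<open>finite S\<close> E ab ab'
      by (intro lie_iso_of_labelling[of "[a, b, a', b']"])
        (auto intro!: simple_graph_insert_edge simple_graph_empty)
    then show ?thesis ..
  next
    case False
    obtain p q r where pqr: "distinct [p, q, r]" "E = {{p, q}, {q, r}}"
      by (rule path_of_adjacent_edges[OF ab(4) ab'(4) _ False]) (use E ab ab' in auto)
    moreover have "{p, q, r} \<subseteq> S"
      using simple_graph_edge_subset[OF G] pqr(2) by blast
    ultimately have "lie_iso TYPE('k) {..<card S} {{0, 1}, {1, 2}} S E"
      using \<open>finite S\<close>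
      by (intro lie_iso_of_labelling[of "[p, q, r]"])
        (auto intro!: simple_graph_insert_edge simple_graph_empty)
    then show ?thesis ..
  qed
qed

lemma lie_iso_triangle:
  fixes S :: "nat set"
  assumes G: "simple_graph S E" and "card S = 3" "card E = 3"
  shows "lie_iso TYPE('k::field) {..<3} {{0, 1}, {1, 2}, {0, 2}} S E"
proof -
  obtain x y z where S: "S = {x, y, z}" "x \<noteq> y" "y \<noteq> z" "x \<noteq> z"
    using card_3_iff[of S] \<open>card S = 3\<close> by auto
  have "e \<in> {{x, y}, {y, z}, {x, z}}" if e: "e \<in> E" for e
  proof -
    obtain a b where "e = {a, b}" "a \<in> S" "b \<in> S" "a \<noteq> b"
      using simple_graph_edgeE[OF G e] .
    then show ?thesis using S(1) by (auto simp: doubleton_eq_iff)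
  qed
  then have "E \<subseteq> {{x, y}, {y, z}, {x, z}}" by blast
  moreover have "card {{x, y}, {y, z}, {x, z}} \<le> 3"
    using card_length[of "[{x, y}, {y, z}, {x, z}]"] by simp
  ultimately have "E = {{x, y}, {y, z}, {x, z}}"
    using card_seteq[of "{{x, y}, {y, z}, {x, z}}" E] \<open>card E = 3\<close> by simp
  then have "lie_iso TYPE('k) {..<card S} {{0, 1}, {1, 2}, {0, 2}} S E"
    using S by (intro lie_iso_of_labelling[of "[x, y, z]"])
      (auto intro!: simple_graph_insert_edge simple_graph_empty)
  then show ?thesis using \<open>card S = 3\<close> by simp
qed

lemma card_quotient_eq_length:
  assumes r: "equiv A r" and xs: "set xs \<subseteq> A" "distinct xs"
    and cover: "\<And>a. a \<in> A \<Longrightarrow> \<exists>x\<in>set xs. (x, a) \<in> r"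
    and separated: "\<And>x y. x \<in> set xs \<Longrightarrow> y \<in> set xs \<Longrightarrow> (x, y) \<in> r \<Longrightarrow> x = y"
  shows "card (A // r) = length xs"
proof -
  have "A // r = (\<lambda>x. r `` {x}) ` set xs"
  proof
    show "A // r \<subseteq> (\<lambda>x. r `` {x}) ` set xs"
    proof
      fix X assume "X \<in> A // r"
      then obtain a where "a \<in> A" "X = r `` {a}" by (rule quotientE)
      moreover obtain x where "x \<in> set xs" "(x, a) \<in> r" using cover[OF \<open>a \<in> A\<close>] by blast
      ultimately show "X \<in> (\<lambda>x. r `` {x}) ` set xs"
        using equiv_class_eq[OF r] by blast
    qed
    show "(\<lambda>x. r `` {x}) ` set xs \<subseteq> A // r"
      using xs(1) by (auto intro: quotientI)
  qed
  moreover have "inj_on (\<lambda>x. r `` {x}) (set xs)"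
  proof (rule inj_onI)
    fix x y assume "x \<in> set xs" "y \<in> set xs" "r `` {x} = r `` {y}"
    then show "x = y"
      using eq_equiv_class_iff[OF r] xs(1) separated by blast
  qed
  ultimately show ?thesis
    by (simp add: card_image distinct_card[OF xs(2)])
qed

definition graphs6_reps :: "(nat set \<times> nat set set) list" where
  "graphs6_reps =
     [({..<6}, {}), ({..<5}, {{0, 1}}), ({..<4}, {{0, 1}, {1, 2}}), ({..<4}, {{0, 1}, {2, 3}}),
      ({..<3}, {{0, 1}, {1, 2}, {0, 2}})]"

lemma graphs6_reps_simple: "R \<in> set graphs6_reps \<Longrightarrow> simple_graph (fst R) (snd R)"
  unfolding graphs6_reps_def
  by (simp, elim disjE; simp; intro simple_graph_insert_edge simple_graph_empty; simp)

lemma graphs6_reps_subset: "set graphs6_reps \<subseteq> graphs6"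
proof
  fix R assume R: "R \<in> set graphs6_reps"
  then have "card (fst R) + card (snd R) = 6"
    unfolding graphs6_reps_def by (simp, elim disjE; simp add: doubleton_eq_iff)
  then show "R \<in> graphs6"
    using graphs6_reps_simple[OF R] unfolding graphs6_def by (cases R) simp
qed

lemma graphs6_classification:
  assumes "(S, E) \<in> graphs6"
  shows "\<exists>R\<in>set graphs6_reps. lie_iso TYPE('k::field) (fst R) (snd R) S E"
proof -
  have G: "simple_graph S E" and c: "card S + card E = 6"
    using assms unfolding graphs6_def by auto
  have "card E \<le> card S * (card S - 1) div 2"
    using simple_graph_card_edges_le[OF G] by (simp add: choose_two)
  then have "card S \<noteq> 0" "card S \<noteq> 1" "card S \<noteq> 2"
    using c by auto
  then have "card S = 3 \<or> card S = 4 \<or> card S = 5 \<or> card S = 6"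
    using c by presburger
  moreover have "E = {}" if "card E = 0"
    using that simple_graph_finite_edges[OF G] by simp
  moreover have "finite S" using G unfolding simple_graph_def by blast
  ultimately show ?thesis
    using c lie_iso_triangle[OF G] lie_iso_two_edges[OF G] lie_iso_single_edge[OF G]
      lie_iso_edgeless[of S, where 'k = 'k]
    unfolding graphs6_reps_def by auto
qed

lemma lie_iso_graphs6_reps_eq:
  assumes "R \<in> set graphs6_reps" "R' \<in> set graphs6_reps"
    and "lie_iso TYPE('k::field) (fst R) (snd R) (fst R') (snd R')"
  shows "R = R'"
proof -
  define inv where "inv R = (min (card (snd R)) 3, has_central_non_bracket TYPE('k) (fst R) (snd R))"
    for R :: "nat set \<times> nat set set"
  have "inv R = inv R'"
    unfolding inv_def
    using lie_iso_min_card_edges[OF graphs6_reps_simple[OF assms(1)] graphs6_reps_simple[OF assms(2)] assms(3)]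
      lie_iso_central_non_bracket_iff[OF assms(3)] by simp
  moreover have "inj_on inv (set graphs6_reps)"
  proof -
    have "has_central_non_bracket TYPE('k) {..<6::nat} {}"
      "has_central_non_bracket TYPE('k) {..<5::nat} {{0, 1}}"
      "has_central_non_bracket TYPE('k) {..<4::nat} {{0, 1}, {1, 2}}"
      by (rule isolated_vertex_central_non_bracket[of 3]; simp)+
    then show ?thesis
      using two_disjoint_edges_no_central_non_bracket[where 'k = 'k]
      unfolding inj_on_def inv_def graphs6_reps_def by (auto simp: doubleton_eq_iff)
  qed
  ultimately show ?thesis using assms(1,2) inj_onD by metis
qed

theorem mainTheorem5:
  assumes "(2::'k::field) \<noteq> 0"
  shows "card (graphs6 // {(g, h). g \<in> graphs6 \<and> h \<in> graphs6 \<and>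
            lie_iso TYPE('k) (fst g) (snd g) (fst h) (snd h)}) = 5"
proof -
  have "card (graphs6 // {(g, h). g \<in> graphs6 \<and> h \<in> graphs6 \<and>
            lie_iso TYPE('k) (fst g) (snd g) (fst h) (snd h)}) = length graphs6_reps"
  proof (rule card_quotient_eq_length[OF equiv_lie_iso graphs6_reps_subset])
    show "distinct graphs6_reps"
      by (simp add: graphs6_reps_def doubleton_eq_iff)
    show "\<exists>R\<in>set graphs6_reps. (R, g) \<in> {(g, h). g \<in> graphs6 \<and> h \<in> graphs6 \<and>
            lie_iso TYPE('k) (fst g) (snd g) (fst h) (snd h)}" if "g \<in> graphs6" for g
      using graphs6_classification[of "fst g" "snd g", where 'k = 'k] graphs6_reps_subset that
      by fastforce
  qed (use lie_iso_graphs6_reps_eq in blast)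
  then show ?thesis by (simp add: graphs6_reps_def)
qed

end
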